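(* Let $H$ be a finitely generated group, let $\phi\in\operatorname{Aut}(H)$ and let $K$ be a proper subgroup of $H$. Let $G=H\ast_{(K,\phi)}=\langle H, t;\ tkt^{-1}=\phi(k),\ k\in K\rangle$. If the group $N_H(K)/K$ is not residually finite, then $G$ is not residually finite.
   Context: For a group $H$, $\phi\in\operatorname{Aut}(H)$ and a proper subgroup $K\lneq H$, the automorphism-induced HNN-extension $H\ast_{(K,\phi)}$ is the group given by the relative presentation $\langle H, t;\ tkt^{-1}=\phi(k),\ k\in K\rangle$. $N_H(K)$ denotes the normalizer of $K$ in $H$. *)

theory Defs
  imports "HOL-Algebra.Algebra"
begin

definition residually_finite :: "('a, 'b) monoid_scheme \<Rightarrow> bool" where
  "residually_finite G \<longleftrightarrow>
     (\<forall>g \<in> carrier G. g \<noteq> \<one>\<^bsub>G\<^esub> \<longrightarrow>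
        (\<exists>N. N \<lhd> G \<and> finite (rcosets\<^bsub>G\<^esub> N) \<and> g \<notin> N))"

definition finitely_generated :: "('a, 'b) monoid_scheme \<Rightarrow> bool" where
  "finitely_generated G \<longleftrightarrow>
     (\<exists>S. finite S \<and> S \<subseteq> carrier G \<and> generate G S = carrier G)"

text \<open>Letters of the HNN-extension: \<open>Inl h\<close> is an element of \<open>H\<close>,
\<open>Inr True\<close> is the stable letter \<open>t\<close>, \<open>Inr False\<close> is \<open>t\<inverse>\<close>.\<close>
type_synonym 'a hnn_word = "('a + bool) list"

definition hnn_words :: "('a, 'b) monoid_scheme \<Rightarrow> 'a hnn_word set" where
  "hnn_words H = {w. \<forall>x \<in> set w. case x of Inl h \<Rightarrow> h \<in> carrier H | Inr _ \<Rightarrow> True}"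

inductive hnn_eq :: "('a, 'b) monoid_scheme \<Rightarrow> 'a set \<Rightarrow> ('a \<Rightarrow> 'a)
    \<Rightarrow> 'a hnn_word \<Rightarrow> 'a hnn_word \<Rightarrow> bool"
  for H K \<phi> where
  refl: "w \<in> hnn_words H \<Longrightarrow> hnn_eq H K \<phi> w w"
| sym: "hnn_eq H K \<phi> u v \<Longrightarrow> hnn_eq H K \<phi> v u"
| trans: "hnn_eq H K \<phi> u v \<Longrightarrow> hnn_eq H K \<phi> v w \<Longrightarrow> hnn_eq H K \<phi> u w"
| cong: "hnn_eq H K \<phi> u v \<Longrightarrow> a \<in> hnn_words H \<Longrightarrow> b \<in> hnn_words H
          \<Longrightarrow> hnn_eq H K \<phi> (a @ u @ b) (a @ v @ b)"
| one: "hnn_eq H K \<phi> [Inl \<one>\<^bsub>H\<^esub>] []"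
| mult: "x \<in> carrier H \<Longrightarrow> y \<in> carrier H
          \<Longrightarrow> hnn_eq H K \<phi> [Inl x, Inl y] [Inl (x \<otimes>\<^bsub>H\<^esub> y)]"
| t_inv: "hnn_eq H K \<phi> [Inr True, Inr False] []"
| inv_t: "hnn_eq H K \<phi> [Inr False, Inr True] []"
| conj: "k \<in> K \<Longrightarrow> hnn_eq H K \<phi> [Inr True, Inl k, Inr False] [Inl (\<phi> k)]"

definition hnn_class :: "('a, 'b) monoid_scheme \<Rightarrow> 'a set \<Rightarrow> ('a \<Rightarrow> 'a)
    \<Rightarrow> 'a hnn_word \<Rightarrow> 'a hnn_word set" where
  "hnn_class H K \<phi> w = {v. hnn_eq H K \<phi> w v}"

definition hnn_mult :: "('a, 'b) monoid_scheme \<Rightarrow> 'a set \<Rightarrow> ('a \<Rightarrow> 'a)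
    \<Rightarrow> 'a hnn_word set \<Rightarrow> 'a hnn_word set \<Rightarrow> 'a hnn_word set" where
  "hnn_mult H K \<phi> A B = hnn_class H K \<phi> ((SOME u. u \<in> A) @ (SOME v. v \<in> B))"

definition HNN :: "('a, 'b) monoid_scheme \<Rightarrow> 'a set \<Rightarrow> ('a \<Rightarrow> 'a)
    \<Rightarrow> 'a hnn_word set monoid" where
  "HNN H K \<phi> =
    \<lparr> carrier = hnn_class H K \<phi> ` hnn_words H,
      monoid.mult = hnn_mult H K \<phi>,
      one = hnn_class H K \<phi> [] \<rparr>"

end

theory Submission
  imports Defs
begin

(* Let t be the stable letter and defect x = t x t\<inverse> \<phi>(x)\<inverse>. An explicit action of the
   HNN-extension on H \<times> bool shows that defect n is trivial only for n \<in> K. Given a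
   finite-index normal subgroup N of the extension, the l \<in> N\<^sub>H(K) with l, \<phi>(l) \<in> N form a
   finite-index normal subgroup of N\<^sub>H(K), and defect (k l) is conjugate to defect l \<in> N
   for k \<in> K. So if every finite-index normal subgroup of N\<^sub>H(K)/K contains nK, every N
   contains defect n, and residual finiteness of the extension would force n \<in> K. *)

lemma (in group_hom) finite_rcosets_kernel:
  assumes "finite (carrier H)"
  shows "finite (rcosets (kernel G H h))"
proof -
  have "finite (carrier (G Mod kernel G H h))"
    by (rule inj_on_finite[OF FactGroup_inj_on _ assms])
       (rule image_subsetI, rule FactGroup_the_elem_mem)
  then show ?thesis by (simp add: FactGroup_def)
qed

lemma (in group_hom) finite_rcosets_image:
  assumes L: "L \<subseteq> carrier G" and surj: "h ` carrier G = carrier H"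
    and fin: "finite (rcosets L)"
  shows "finite (rcosets\<^bsub>H\<^esub> (h ` L))"
proof -
  have image_coset: "h ` L #>\<^bsub>H\<^esub> h g = h ` (L #> g)" if "g \<in> carrier G" for g
  proof -
    have "\<forall>l \<in> L. h (l \<otimes> g) = h l \<otimes>\<^bsub>H\<^esub> h g" using L that by auto
    then show ?thesis by (force simp: r_coset_def)
  qed
  have "rcosets\<^bsub>H\<^esub> (h ` L) = (image h) ` (rcosets L)"
    unfolding RCOSETS_def surj[symmetric] by (simp add: image_UN image_coset)
  then show ?thesis using fin by simp
qed

lemma (in normal) FactGroup_image_finite_index_normal:
  assumes "L \<lhd> G" and "finite (rcosets L)"
  shows "(\<lambda>x. H #> x) ` L \<lhd> G Mod H \<and> finite (rcosets\<^bsub>G Mod H\<^esub> ((\<lambda>x. H #> x) ` L))"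
proof -
  interpret L: normal L G by (rule assms(1))
  interpret quot: group_hom G "G Mod H" "\<lambda>x. H #> x"
    by (rule group_hom.intro[OF is_group factorgroup_is_group])
       (rule group_hom_axioms.intro[OF r_coset_hom_Mod])
  have surj: "(\<lambda>x. H #> x) ` carrier G = carrier (G Mod H)"
    by (simp add: carrier_FactGroup)
  show ?thesis
    using L.surj_hom_normal_subgroup[OF quot.group_hom_axioms surj]
      quot.finite_rcosets_image[OF L.subset surj assms(2)] by simp
qed

lemma carrier_HNN: "carrier (HNN H K \<phi>) = hnn_class H K \<phi> ` hnn_words H"
  by (simp add: HNN_def)

lemma one_HNN: "\<one>\<^bsub>HNN H K \<phi>\<^esub> = hnn_class H K \<phi> []"
  by (simp add: HNN_def)

lemma Nil_hnn_words [simp]: "[] \<in> hnn_words H"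
  by (simp add: hnn_words_def)

lemma Cons_hnn_words [simp]:
  "Inl x # w \<in> hnn_words H \<longleftrightarrow> x \<in> carrier H \<and> w \<in> hnn_words H"
  "Inr b # w \<in> hnn_words H \<longleftrightarrow> w \<in> hnn_words H"
  by (simp_all add: hnn_words_def)

lemma hnn_class_carrier [simp]: "w \<in> hnn_words H \<Longrightarrow> hnn_class H K \<phi> w \<in> carrier (HNN H K \<phi>)"
  by (simp add: carrier_HNN)

lemma hnn_words_append [simp]: "u @ v \<in> hnn_words H \<longleftrightarrow> u \<in> hnn_words H \<and> v \<in> hnn_words H"
  by (auto simp: hnn_words_def)

locale hnn_data = group H for H (structure) +
  fixes K and \<phi> :: "'a \<Rightarrow> 'a"
  assumes phi_iso: "\<phi> \<in> iso H H" and K_subgroup: "subgroup K H"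
begin

lemma phi_hom: "\<phi> \<in> hom H H"
  using phi_iso by (simp add: iso_def)

lemma phi_bij: "bij_betw \<phi> (carrier H) (carrier H)"
  using phi_iso by (simp add: iso_def)

lemma phi_closed [simp]: "x \<in> carrier H \<Longrightarrow> \<phi> x \<in> carrier H"
  using phi_hom by (rule hom_in_carrier)

lemma phi_mult [simp]: "x \<in> carrier H \<Longrightarrow> y \<in> carrier H \<Longrightarrow> \<phi> (x \<otimes> y) = \<phi> x \<otimes> \<phi> y"
  using phi_hom by (rule hom_mult)

lemma phi_inv_into_closed [simp]: "x \<in> carrier H \<Longrightarrow> inv_into (carrier H) \<phi> x \<in> carrier H"
  using phi_bij by (auto simp: bij_betw_def inv_into_into)

lemma phi_inv_into [simp]: "x \<in> carrier H \<Longrightarrow> \<phi> (inv_into (carrier H) \<phi> x) = x"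
  using phi_bij by (auto simp: bij_betw_def f_inv_into_f)

lemma inv_into_phi [simp]: "x \<in> carrier H \<Longrightarrow> inv_into (carrier H) \<phi> (\<phi> x) = x"
  using phi_bij by (auto simp: bij_betw_def inv_into_f_f)

abbreviation G :: "'a hnn_word set monoid" where
  "G \<equiv> HNN H K \<phi>"

lemma K_carrier: "K \<subseteq> carrier H"
  using K_subgroup by (rule subgroup.subset)

definition flip :: "'a \<times> bool \<Rightarrow> 'a \<times> bool" where
  "flip p = (if fst p \<in> K then (fst p, \<not> snd p) else p)"

(* t acts as \<phi> on the first coordinate and toggles the flag exactly on K;
   since left multiplication by k \<in> K preserves K, t k t\<inverse> then acts as \<phi> k. *)
fun letter_action :: "'a + bool \<Rightarrow> 'a \<times> bool \<Rightarrow> 'a \<times> bool" where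
  "letter_action (Inl h) p = (h \<otimes> fst p, snd p)"
| "letter_action (Inr b) p =
     (if b then apfst \<phi> (flip p) else flip (inv_into (carrier H) \<phi> (fst p), snd p))"

definition word_action :: "'a hnn_word \<Rightarrow> 'a \<times> bool \<Rightarrow> 'a \<times> bool" where
  "word_action w = foldr letter_action w"

lemma word_action_append: "word_action (u @ v) p = word_action u (word_action v p)"
  by (simp add: word_action_def)

lemma word_action_closed:
  assumes "w \<in> hnn_words H" and "fst p \<in> carrier H"
  shows "fst (word_action w p) \<in> carrier H"
  using assms
proof (induction w)
  case (Cons c w)
  then show ?case
    by (cases c) (auto simp: word_action_def hnn_words_def flip_def)
qed (simp add: word_action_def)

lemma hnn_eq_word_action:
  assumes "hnn_eq H K \<phi> u v" and "fst p \<in> carrier H"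
  shows "word_action u p = word_action v p"
  using assms
proof (induction u v arbitrary: p rule: hnn_eq.induct)
  case (cong u v a b)
  then show ?case
    using word_action_closed[OF cong.hyps(3) cong.prems] by (simp add: word_action_append)
next
  case (conj k)
  obtain x b where p: "p = (x, b)" by (cases p)
  define y where "y = inv_into (carrier H) \<phi> x"
  have k: "k \<in> carrier H" using conj K_carrier by auto
  have y: "y \<in> carrier H" "\<phi> y = x" using conj p by (simp_all add: y_def)
  have "y = inv k \<otimes> (k \<otimes> y)" using k y by (simp add: m_assoc[symmetric])
  then have "k \<otimes> y \<in> K \<longleftrightarrow> y \<in> K"
    using K_subgroup conj.hyps by (metis subgroup.m_closed subgroup.m_inv_closed)
  then show ?case using k y p by (simp add: word_action_def flip_def y_def[symmetric])
qed (auto simp: word_action_def flip_def m_assoc)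

lemma hnn_eq_imp_words: "hnn_eq H K \<phi> u v \<Longrightarrow> u \<in> hnn_words H \<and> v \<in> hnn_words H"
  by (induction rule: hnn_eq.induct) (use K_carrier in \<open>auto simp: hnn_words_def\<close>)

lemma hnn_eq_append:
  assumes "hnn_eq H K \<phi> u u'" and "hnn_eq H K \<phi> v v'"
  shows "hnn_eq H K \<phi> (u @ v) (u' @ v')"
proof -
  have "hnn_eq H K \<phi> ([] @ u @ v) ([] @ u' @ v)"
    using assms hnn_eq_imp_words by (intro hnn_eq.cong) (auto simp: hnn_words_def)
  moreover have "hnn_eq H K \<phi> (u' @ v @ []) (u' @ v' @ [])"
    using assms hnn_eq_imp_words by (intro hnn_eq.cong) (auto simp: hnn_words_def)
  ultimately show ?thesis by (auto intro: hnn_eq.trans)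
qed

lemma hnn_class_eq_iff:
  "u \<in> hnn_words H \<Longrightarrow> hnn_class H K \<phi> u = hnn_class H K \<phi> v \<longleftrightarrow> hnn_eq H K \<phi> u v"
  unfolding hnn_class_def by (auto intro: hnn_eq.refl hnn_eq.sym hnn_eq.trans)

lemma hnn_eq_some_class_member:
  "u \<in> hnn_words H \<Longrightarrow> hnn_eq H K \<phi> u (SOME v. v \<in> hnn_class H K \<phi> u)"
  unfolding hnn_class_def mem_Collect_eq by (rule someI) (rule hnn_eq.refl)

lemma hnn_class_mult:
  assumes "u \<in> hnn_words H" and "v \<in> hnn_words H"
  shows "hnn_class H K \<phi> u \<otimes>\<^bsub>G\<^esub> hnn_class H K \<phi> v = hnn_class H K \<phi> (u @ v)"
proof -
  have "hnn_eq H K \<phi> (u @ v)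
      ((SOME u'. u' \<in> hnn_class H K \<phi> u) @ (SOME v'. v' \<in> hnn_class H K \<phi> v))"
    using assms by (intro hnn_eq_append hnn_eq_some_class_member)
  then have "hnn_class H K \<phi> (u @ v) = hnn_mult H K \<phi> (hnn_class H K \<phi> u) (hnn_class H K \<phi> v)"
    using assms by (simp add: hnn_mult_def hnn_class_eq_iff)
  then show ?thesis by (simp add: HNN_def)
qed

definition inv_letter :: "'a + bool \<Rightarrow> 'a + bool" where
  "inv_letter c = (case c of Inl h \<Rightarrow> Inl (inv h) | Inr b \<Rightarrow> Inr (\<not> b))"

definition inv_word :: "'a hnn_word \<Rightarrow> 'a hnn_word" where
  "inv_word w = rev (map inv_letter w)"

lemma inv_word_words: "w \<in> hnn_words H \<Longrightarrow> inv_word w \<in> hnn_words H"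
  by (auto simp: hnn_words_def inv_word_def inv_letter_def split: sum.splits)

lemma hnn_eq_inv_letter:
  assumes "[c] \<in> hnn_words H"
  shows "hnn_eq H K \<phi> [inv_letter c, c] []"
proof (cases c)
  case (Inl h)
  then have "h \<in> carrier H" using assms by (simp add: hnn_words_def)
  then have "hnn_eq H K \<phi> [Inl (inv h), Inl h] [Inl \<one>]"
    using hnn_eq.mult[of "inv h" H h] by simp
  then show ?thesis using Inl by (auto simp: inv_letter_def intro: hnn_eq.trans hnn_eq.one)
next
  case (Inr b)
  then show ?thesis by (cases b) (auto simp: inv_letter_def intro: hnn_eq.t_inv hnn_eq.inv_t)
qed

lemma hnn_eq_inv_word:
  "w \<in> hnn_words H \<Longrightarrow> hnn_eq H K \<phi> (inv_word w @ w) []"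
proof (induction w)
  case Nil
  then show ?case by (simp add: inv_word_def hnn_eq.refl)
next
  case (Cons c w)
  then have c: "[c] \<in> hnn_words H" and w: "w \<in> hnn_words H"
    by (auto simp: hnn_words_def)
  have "hnn_eq H K \<phi> (inv_word w @ [inv_letter c, c] @ w) (inv_word w @ [] @ w)"
    using c w by (intro hnn_eq.cong hnn_eq_inv_letter inv_word_words)
  then show ?case using Cons.IH[OF w] by (auto simp: inv_word_def intro: hnn_eq.trans)
qed

lemma group_HNN: "group (G)"
proof (rule groupI)
  fix x assume "x \<in> carrier (G)"
  then obtain w where w: "w \<in> hnn_words H" "x = hnn_class H K \<phi> w"
    by (auto simp: carrier_HNN)
  then have "hnn_class H K \<phi> (inv_word w) \<otimes>\<^bsub>G\<^esub> x = hnn_class H K \<phi> (inv_word w @ w)"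
    using inv_word_words by (simp add: hnn_class_mult)
  also have "\<dots> = \<one>\<^bsub>G\<^esub>"
    using w hnn_eq_inv_word inv_word_words by (simp add: hnn_class_eq_iff one_HNN)
  finally have "hnn_class H K \<phi> (inv_word w) \<otimes>\<^bsub>G\<^esub> x = \<one>\<^bsub>G\<^esub>" .
  then show "\<exists>y \<in> carrier (G). y \<otimes>\<^bsub>G\<^esub> x = \<one>\<^bsub>G\<^esub>"
    using w inv_word_words by (auto simp: carrier_HNN)
qed (auto simp: carrier_HNN one_HNN hnn_class_mult)

sublocale HNN: group G
  by (rule group_HNN)

definition emb :: "'a \<Rightarrow> 'a hnn_word set" where
  "emb x = hnn_class H K \<phi> [Inl x]"

definition stable :: "'a hnn_word set" where
  "stable = hnn_class H K \<phi> [Inr True]"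

lemma emb_hom: "emb \<in> hom H G"
proof (rule homI)
  fix x y assume "x \<in> carrier H" "y \<in> carrier H"
  then show "emb (x \<otimes> y) = emb x \<otimes>\<^bsub>G\<^esub> emb y"
    using hnn_eq.sym[OF hnn_eq.mult] by (simp add: emb_def hnn_class_mult hnn_class_eq_iff)
qed (simp add: emb_def)

sublocale emb: group_hom H G emb
  using emb_hom by unfold_locales

lemma stable_carrier [simp]: "stable \<in> carrier G"
  by (simp add: stable_def carrier_HNN)

lemma inv_stable: "inv\<^bsub>G\<^esub> stable = hnn_class H K \<phi> [Inr False]"
  by (rule HNN.inv_equality)
     (simp_all add: stable_def hnn_class_mult hnn_class_eq_iff one_HNN hnn_eq.inv_t)

lemma phi_one [simp]: "\<phi> \<one> = \<one>"
  using hom_one[OF phi_hom is_group is_group] .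

lemma inv_into_phi_one [simp]: "inv_into (carrier H) \<phi> \<one> = \<one>"
  using inv_into_phi[of \<one>] by simp

lemma stable_emb_commute_iff:
  assumes x: "x \<in> carrier H"
  shows "stable \<otimes>\<^bsub>G\<^esub> emb x = emb (\<phi> x) \<otimes>\<^bsub>G\<^esub> stable \<longleftrightarrow> x \<in> K"
proof -
  have "stable \<otimes>\<^bsub>G\<^esub> emb x \<otimes>\<^bsub>G\<^esub> inv\<^bsub>G\<^esub> stable = hnn_class H K \<phi> [Inr True, Inl x, Inr False]"
    using x by (simp add: inv_stable) (simp add: stable_def emb_def hnn_class_mult)
  moreover have "hnn_eq H K \<phi> [Inr True, Inl x, Inr False] [Inl (\<phi> x)] \<longleftrightarrow> x \<in> K"
  proof
    assume "hnn_eq H K \<phi> [Inr True, Inl x, Inr False] [Inl (\<phi> x)]"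
    then have "word_action [Inr True, Inl x, Inr False] (\<one>, False) = word_action [Inl (\<phi> x)] (\<one>, False)"
      by (rule hnn_eq_word_action) simp
    then show "x \<in> K"
      using x subgroup.one_closed[OF K_subgroup] by (auto simp: word_action_def flip_def split: if_splits)
  qed (rule hnn_eq.conj)
  ultimately have "stable \<otimes>\<^bsub>G\<^esub> emb x \<otimes>\<^bsub>G\<^esub> inv\<^bsub>G\<^esub> stable = emb (\<phi> x) \<longleftrightarrow> x \<in> K"
    using x by (simp add: emb_def hnn_class_eq_iff)
  then show ?thesis
    using x by (simp add: HNN.inv_solve_right')
qed

definition defect :: "'a \<Rightarrow> 'a hnn_word set" where
  "defect x = stable \<otimes>\<^bsub>G\<^esub> emb x \<otimes>\<^bsub>G\<^esub> inv\<^bsub>G\<^esub> stable \<otimes>\<^bsub>G\<^esub> inv\<^bsub>G\<^esub> emb (\<phi> x)"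

lemma defect_carrier: "x \<in> carrier H \<Longrightarrow> defect x \<in> carrier G"
  by (simp add: defect_def)

lemma defect_eq_one_iff: "x \<in> carrier H \<Longrightarrow> defect x = \<one>\<^bsub>G\<^esub> \<longleftrightarrow> x \<in> K"
  by (simp add: defect_def HNN.inv_solve_right' stable_emb_commute_iff)

lemma defect_mult_left:
  assumes k: "k \<in> K" and x: "x \<in> carrier H"
  shows "defect (k \<otimes> x) = emb (\<phi> k) \<otimes>\<^bsub>G\<^esub> defect x \<otimes>\<^bsub>G\<^esub> inv\<^bsub>G\<^esub> emb (\<phi> k)"
proof -
  have kc: "k \<in> carrier H" using k K_carrier by auto
  have commute: "stable \<otimes>\<^bsub>G\<^esub> emb k = emb (\<phi> k) \<otimes>\<^bsub>G\<^esub> stable"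
    using k kc stable_emb_commute_iff by simp
  have "defect (k \<otimes> x) = (stable \<otimes>\<^bsub>G\<^esub> emb k) \<otimes>\<^bsub>G\<^esub> emb x \<otimes>\<^bsub>G\<^esub> inv\<^bsub>G\<^esub> stable
      \<otimes>\<^bsub>G\<^esub> inv\<^bsub>G\<^esub> emb (\<phi> x) \<otimes>\<^bsub>G\<^esub> inv\<^bsub>G\<^esub> emb (\<phi> k)"
    using kc x by (simp add: defect_def HNN.inv_mult_group HNN.m_assoc)
  also have "\<dots> = emb (\<phi> k) \<otimes>\<^bsub>G\<^esub> defect x \<otimes>\<^bsub>G\<^esub> inv\<^bsub>G\<^esub> emb (\<phi> k)"
    using kc x by (simp only: commute) (simp add: defect_def HNN.m_assoc)
  finally show ?thesis .
qed

lemma defect_in_normal: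
  assumes "N \<lhd> G" and "x \<in> carrier H" and "emb x \<in> N" and "emb (\<phi> x) \<in> N"
  shows "defect x \<in> N"
proof -
  interpret N: normal N G by (rule assms(1))
  show ?thesis
    using assms N.inv_op_closed2[of stable "emb x"] unfolding defect_def
    by (simp add: N.m_closed N.m_inv_closed)
qed

abbreviation NH :: "('a, 'b) monoid_scheme" where
  "NH \<equiv> H\<lparr>carrier := normalizer H K\<rparr>"

lemma subgroup_normalizer: "subgroup (normalizer H K) H"
  using K_carrier by (rule normalizer_imp_subgroup)

lemma normal_K_NH: "K \<lhd> NH"
  using K_subgroup by (rule subgroup_in_normalizer)

lemma finite_index_normal_subgroup_emb_into:
  assumes "N \<lhd> G" and fin: "finite (rcosets\<^bsub>G\<^esub> N)"
  obtains L where "L \<lhd> NH" and "finite (rcosets\<^bsub>NH\<^esub> L)"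
    and "\<And>l. l \<in> L \<Longrightarrow> emb l \<in> N \<and> emb (\<phi> l) \<in> N"
proof -
  interpret N: normal N G by (rule assms(1))
  let ?Q = "G Mod N"
  define \<psi> where "\<psi> x = (N #>\<^bsub>G\<^esub> emb x, N #>\<^bsub>G\<^esub> emb (\<phi> x))" for x
  have "fst \<circ> \<psi> = (\<lambda>a. N #>\<^bsub>G\<^esub> a) \<circ> emb" and "snd \<circ> \<psi> = ((\<lambda>a. N #>\<^bsub>G\<^esub> a) \<circ> emb) \<circ> \<phi>"
    by (auto simp: \<psi>_def)
  moreover have "(\<lambda>a. N #>\<^bsub>G\<^esub> a) \<circ> emb \<in> hom H ?Q"
    using emb_hom N.r_coset_hom_Mod by (rule Group.hom_compose)
  ultimately have "\<psi> \<in> hom H (?Q \<times>\<times> ?Q)"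
    using phi_hom by (simp add: hom_pairwise Group.hom_compose)
  then have "group_hom H (?Q \<times>\<times> ?Q) \<psi>"
    using DirProd_group[OF N.factorgroup_is_group N.factorgroup_is_group]
    by (simp add: group_hom_def group_hom_axioms_def is_group)
  then interpret \<psi>: group_hom NH "?Q \<times>\<times> ?Q" \<psi>
    using subgroup_normalizer by (rule group_hom.induced_group_hom')
  show ?thesis
  proof (rule that)
    show "kernel NH (?Q \<times>\<times> ?Q) \<psi> \<lhd> NH" by (rule \<psi>.normal_kernel)
    show "finite (rcosets\<^bsub>NH\<^esub> kernel NH (?Q \<times>\<times> ?Q) \<psi>)"
      using fin by (intro \<psi>.finite_rcosets_kernel) (simp add: FactGroup_def)
  next
    fix l assume "l \<in> kernel NH (?Q \<times>\<times> ?Q) \<psi>"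
    then have l: "l \<in> carrier H" "N #>\<^bsub>G\<^esub> emb l = N" "N #>\<^bsub>G\<^esub> emb (\<phi> l) = N"
      using subgroup.subset[OF subgroup_normalizer] by (auto simp: kernel_def \<psi>_def)
    then show "emb l \<in> N \<and> emb (\<phi> l) \<in> N"
      using HNN.rcos_self[OF _ N.subgroup_axioms] by (metis emb.hom_closed phi_closed)
  qed
qed

lemma defect_in_finite_index_normal:
  assumes N: "N \<lhd> G" "finite (rcosets\<^bsub>G\<^esub> N)"
    and n: "n \<in> normalizer H K"
    and n_res: "\<And>M. M \<lhd> NH Mod K \<Longrightarrow> finite (rcosets\<^bsub>NH Mod K\<^esub> M) \<Longrightarrow> K #>\<^bsub>NH\<^esub> n \<in> M"
  shows "defect n \<in> N"
proof -
  interpret N: normal N G by (rule N(1))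
  interpret K: normal K NH by (rule normal_K_NH)
  obtain L where L: "L \<lhd> NH" "finite (rcosets\<^bsub>NH\<^esub> L)"
    and L_N: "\<And>l. l \<in> L \<Longrightarrow> emb l \<in> N \<and> emb (\<phi> l) \<in> N"
    using finite_index_normal_subgroup_emb_into[OF N] by blast
  have "K #>\<^bsub>NH\<^esub> n \<in> (\<lambda>x. K #>\<^bsub>NH\<^esub> x) ` L"
    using n_res K.FactGroup_image_finite_index_normal[OF L] by blast
  then obtain l where l: "l \<in> L" "K #>\<^bsub>NH\<^esub> n = K #>\<^bsub>NH\<^esub> l" by blast
  have l_carrier: "l \<in> carrier H"
    using l(1) normal_imp_subgroup[OF L(1), THEN subgroup.subset] subgroup_normalizer[THEN subgroup.subset]
    by auto
  have "n \<in> K #>\<^bsub>NH\<^esub> l"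
    using K.rcos_self[of n, OF _ K.subgroup_axioms] n l(2) by simp
  then obtain k where k: "k \<in> K" and nkl: "n = k \<otimes> l" by (auto simp: r_coset_def)
  have "defect l \<in> N"
    using L_N[OF l(1)] l_carrier N(1) by (intro defect_in_normal) auto
  then show ?thesis
    using N.inv_op_closed2 k l_carrier K_carrier by (auto simp: nkl defect_mult_left)
qed

end

theorem corollary1p1:
  fixes H :: "('a, 'b) monoid_scheme" and K :: "'a set" and \<phi> :: "'a \<Rightarrow> 'a"
  assumes "group H"
    and "finitely_generated H"
    and "\<phi> \<in> iso H H"
    and "subgroup K H" and "K \<noteq> carrier H"
    and "\<not> residually_finite ((H\<lparr>carrier := normalizer H K\<rparr>) Mod K)"
  shows "\<not> residually_finite (HNN H K \<phi>)"
proof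
  assume RF: "residually_finite (HNN H K \<phi>)"
  interpret hnn_data H K \<phi>
    using assms(1,3,4) by (simp add: hnn_data_def hnn_data_axioms_def)
  interpret K: normal K NH by (rule normal_K_NH)
  obtain g where g: "g \<in> carrier (NH Mod K)" "g \<noteq> \<one>\<^bsub>NH Mod K\<^esub>"
    and g_res: "\<And>M. M \<lhd> NH Mod K \<Longrightarrow> finite (rcosets\<^bsub>NH Mod K\<^esub> M) \<Longrightarrow> g \<in> M"
    using assms(6) unfolding residually_finite_def by blast
  then obtain n where n: "n \<in> normalizer H K" and gn: "g = K #>\<^bsub>NH\<^esub> n"
    by (auto simp: carrier_FactGroup)
  have "n \<notin> K"
    using g(2) gn K.rcos_const by auto
  then have "defect n \<noteq> \<one>\<^bsub>HNN H K \<phi>\<^esub>"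
    using n subgroup.subset[OF subgroup_normalizer] defect_eq_one_iff by auto
  then obtain N where "N \<lhd> HNN H K \<phi>" "finite (rcosets\<^bsub>HNN H K \<phi>\<^esub> N)" "defect n \<notin> N"
    using RF n subgroup.subset[OF subgroup_normalizer] defect_carrier
    unfolding residually_finite_def by blast
  then show False
    using defect_in_finite_index_normal n g_res gn by blast
qed

end
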